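(* Let $M$ be a graded generalized Eulerian $A_n(K)$-module and let $S\subseteq R$ be a multiplicatively closed set of homogeneous elements. Then $S^{-1}M$ is a generalized Eulerian $A_n(K)$-module. In particular $M_f$ is generalized Eulerian for every homogeneous $f\in R$.
   Context: $K$ is a field of characteristic zero, $R=K[X_1,\dots,X_n]$ standard graded, $A_n(K)$ the Weyl algebra graded by $\deg X_i=1$, $\deg\partial_i=-1$; $\mathcal E_n=\sum_iX_i\partial_i$; $|z|$ is the degree of homogeneous $z$. A graded left $A_n(K)$-module $M$ is generalized Eulerian if for every homogeneous $z\in M$ there is $a\ge1$ with $(\mathcal E_n-|z|)^az=0$. $S^{-1}M$ is graded by $|z/s|=|z|-|s|$ and is an $A_n(K)$-module via the quotient rule. *)

theory Defs
  imports Main "HOL.Vector_Spaces" "HOL-Library.Poly_Mapping"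
begin

text \<open>Polynomials are finitely supported maps from monomials (exponent vectors
  nat =>0 nat) to coefficients. A polynomial lies in R when only the variables
  X_0 ... X_(n-1) occur.\<close>

type_synonym 'k mpoly = "(nat \<Rightarrow>\<^sub>0 nat) \<Rightarrow>\<^sub>0 'k"

definition mdeg :: "(nat \<Rightarrow>\<^sub>0 nat) \<Rightarrow> nat" where
  "mdeg \<alpha> = (\<Sum>i\<in>Poly_Mapping.keys \<alpha>. Poly_Mapping.lookup \<alpha> i)"

definition in_R :: "nat \<Rightarrow> 'k::zero mpoly \<Rightarrow> bool" where
  "in_R n f \<longleftrightarrow> (\<forall>\<alpha>\<in>Poly_Mapping.keys f. Poly_Mapping.keys \<alpha> \<subseteq> {..<n})"

definition homog_poly :: "'k::zero mpoly \<Rightarrow> bool" where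
  "homog_poly f \<longleftrightarrow> (\<exists>d. \<forall>\<alpha>\<in>Poly_Mapping.keys f. mdeg \<alpha> = d)"

text \<open>Degree of a homogeneous polynomial (for 0 the value is irrelevant).\<close>
definition pdeg :: "'k::zero mpoly \<Rightarrow> nat" where
  "pdeg f = mdeg (SOME \<alpha>. \<alpha> \<in> Poly_Mapping.keys f)"

definition mult_closed :: "'k::semiring_1 mpoly set \<Rightarrow> bool" where
  "mult_closed S \<longleftrightarrow> 1 \<in> S \<and> (\<forall>s\<in>S. \<forall>t\<in>S. s * t \<in> S)"

definition pderiv_mp :: "nat \<Rightarrow> 'k::semiring_1 mpoly \<Rightarrow> 'k mpoly" where
  "pderiv_mp i f = (\<Sum>\<alpha>\<in>Poly_Mapping.keys f.
      Poly_Mapping.single (\<alpha> - Poly_Mapping.single i 1) (of_nat (Poly_Mapping.lookup \<alpha> i) * Poly_Mapping.lookup f \<alpha>))"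

definition mon_act :: "nat \<Rightarrow> (nat \<Rightarrow> 'm \<Rightarrow> 'm) \<Rightarrow> (nat \<Rightarrow>\<^sub>0 nat) \<Rightarrow> 'm \<Rightarrow> 'm" where
  "mon_act n X \<alpha> = fold (\<lambda>i g. (X i ^^ Poly_Mapping.lookup \<alpha> i) \<circ> g) [0..<n] id"

definition poly_act :: "nat \<Rightarrow> ('k::zero \<Rightarrow> 'm::comm_monoid_add \<Rightarrow> 'm) \<Rightarrow> (nat \<Rightarrow> 'm \<Rightarrow> 'm)
    \<Rightarrow> 'k mpoly \<Rightarrow> 'm \<Rightarrow> 'm" where
  "poly_act n sc X f m = (\<Sum>\<alpha>\<in>Poly_Mapping.keys f. sc (Poly_Mapping.lookup f \<alpha>) (mon_act n X \<alpha> m))"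

text \<open>An A_n(K)-module structure on the K-vector space 'm (scalar multiplication sc)
  is given by K-linear operators X i (multiplication by X_i) and D i (partial_i), i < n,
  satisfying the Weyl algebra relations. The grading (deg X_i = 1, deg partial_i = -1)
  is a family Hom d of subspaces (Hom d = M_d) whose sum is direct and equals M.\<close>

definition graded_weyl_module ::
  "nat \<Rightarrow> ('k::field \<Rightarrow> 'm::ab_group_add \<Rightarrow> 'm) \<Rightarrow> (nat \<Rightarrow> 'm \<Rightarrow> 'm) \<Rightarrow> (nat \<Rightarrow> 'm \<Rightarrow> 'm)
     \<Rightarrow> (int \<Rightarrow> 'm set) \<Rightarrow> bool" where
  "graded_weyl_module n sc X D Hom \<longleftrightarrow>
     vector_space sc \<and>
     (\<forall>i<n. Vector_Spaces.linear sc sc (X i) \<and> Vector_Spaces.linear sc sc (D i)) \<and>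
     (\<forall>i<n. \<forall>j<n. \<forall>m. X i (X j m) = X j (X i m)) \<and>
     (\<forall>i<n. \<forall>j<n. \<forall>m. D i (D j m) = D j (D i m)) \<and>
     (\<forall>i<n. \<forall>j<n. \<forall>m. D i (X j m) - X j (D i m) = (if i = j then m else 0)) \<and>
     (\<forall>d. 0 \<in> Hom d \<and> (\<forall>x\<in>Hom d. \<forall>y\<in>Hom d. x + y \<in> Hom d) \<and> (\<forall>k. \<forall>x\<in>Hom d. sc k x \<in> Hom d)) \<and>
     (\<forall>m. \<exists>!c :: int \<Rightarrow> 'm. finite {d. c d \<noteq> 0} \<and> (\<forall>d. c d \<in> Hom d) \<and>
            m = (\<Sum>d\<in>{d. c d \<noteq> 0}. c d)) \<and>
     (\<forall>i<n. \<forall>d. \<forall>m\<in>Hom d. X i m \<in> Hom (d + 1) \<and> D i m \<in> Hom (d - 1))"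

text \<open>Euler operator E_n = sum_i X_i partial_i, written with an abstract addition so that
  it applies to any module given by explicit operations.\<close>
definition euler :: "nat \<Rightarrow> ('m \<Rightarrow> 'm \<Rightarrow> 'm) \<Rightarrow> 'm \<Rightarrow> (nat \<Rightarrow> 'm \<Rightarrow> 'm) \<Rightarrow> (nat \<Rightarrow> 'm \<Rightarrow> 'm)
    \<Rightarrow> 'm \<Rightarrow> 'm" where
  "euler n add zero X D z = foldr (\<lambda>i acc. add (X i (D i z)) acc) [0..<n] zero"

definition gen_eulerian ::
  "nat \<Rightarrow> ('k::ring_1 \<Rightarrow> 'm \<Rightarrow> 'm) \<Rightarrow> ('m \<Rightarrow> 'm \<Rightarrow> 'm) \<Rightarrow> 'm \<Rightarrow> (nat \<Rightarrow> 'm \<Rightarrow> 'm)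
     \<Rightarrow> (nat \<Rightarrow> 'm \<Rightarrow> 'm) \<Rightarrow> (int \<Rightarrow> 'm set) \<Rightarrow> bool" where
  "gen_eulerian n sc add zero X D Hom \<longleftrightarrow>
     (\<forall>d. \<forall>z\<in>Hom d. \<exists>a::nat. a \<ge> 1 \<and>
        ((\<lambda>w. add (euler n add zero X D w) (sc (- of_int d) w)) ^^ a) z = zero)"

text \<open>Elements of S^{-1}M are equivalence classes of pairs (m, s), s in S, where
  (m,s) ~ (m',s') iff t (s' m - s m') = 0 for some t in S.\<close>

definition loc_rel :: "nat \<Rightarrow> ('k::zero \<Rightarrow> 'm::ab_group_add \<Rightarrow> 'm) \<Rightarrow> (nat \<Rightarrow> 'm \<Rightarrow> 'm)
    \<Rightarrow> 'k mpoly set \<Rightarrow> ('m \<times> 'k mpoly) \<Rightarrow> ('m \<times> 'k mpoly) \<Rightarrow> bool" where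
  "loc_rel n sc X S p q \<longleftrightarrow> snd p \<in> S \<and> snd q \<in> S \<and>
     (\<exists>t\<in>S. poly_act n sc X t
        (poly_act n sc X (snd q) (fst p) - poly_act n sc X (snd p) (fst q)) = 0)"

definition loc_class :: "nat \<Rightarrow> ('k::zero \<Rightarrow> 'm::ab_group_add \<Rightarrow> 'm) \<Rightarrow> (nat \<Rightarrow> 'm \<Rightarrow> 'm)
    \<Rightarrow> 'k mpoly set \<Rightarrow> ('m \<times> 'k mpoly) \<Rightarrow> ('m \<times> 'k mpoly) set" where
  "loc_class n sc X S p = {q. loc_rel n sc X S p q}"

definition loc_rep :: "('m \<times> 'k mpoly) set \<Rightarrow> 'm \<times> 'k mpoly" where
  "loc_rep c = (SOME p. p \<in> c)"

definition loc_add where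
  "loc_add n sc X S c1 c2 =
     (case loc_rep c1 of (m1, s1) \<Rightarrow> case loc_rep c2 of (m2, s2) \<Rightarrow>
        loc_class n sc X S (poly_act n sc X s2 m1 + poly_act n sc X s1 m2, s1 * s2))"

definition loc_zero where
  "loc_zero n sc X S = loc_class n sc X S (0, 1)"

definition loc_scale where
  "loc_scale n sc X S k c = (case loc_rep c of (m, s) \<Rightarrow> loc_class n sc X S (sc k m, s))"

text \<open>X_i acts on numerators; partial_i acts by the quotient rule
  partial_i (m/s) = (s partial_i m - (partial_i s) m) / s^2.\<close>
definition loc_X where
  "loc_X n sc X S i c = (case loc_rep c of (m, s) \<Rightarrow> loc_class n sc X S (X i m, s))"

definition loc_D where
  "loc_D n sc X D S i c = (case loc_rep c of (m, s) \<Rightarrow>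
      loc_class n sc X S (poly_act n sc X s (D i m) - poly_act n sc X (pderiv_mp i s) m, s * s))"

text \<open>Grading |m/s| = |m| - |s|: the degree-d part consists of the classes m/s with
  s in S and m homogeneous of degree d + |s|.\<close>
definition loc_hom where
  "loc_hom n sc X S Hom d =
     {loc_class n sc X S (m, s) | m s. s \<in> S \<and> m \<in> Hom (d + int (pdeg s))}"

definition loc_gen_eulerian ::
  "nat \<Rightarrow> ('k::field_char_0 \<Rightarrow> 'm::ab_group_add \<Rightarrow> 'm) \<Rightarrow> (nat \<Rightarrow> 'm \<Rightarrow> 'm) \<Rightarrow> (nat \<Rightarrow> 'm \<Rightarrow> 'm)
     \<Rightarrow> (int \<Rightarrow> 'm set) \<Rightarrow> 'k mpoly set \<Rightarrow> bool" where
  "loc_gen_eulerian n sc X D Hom S =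
     gen_eulerian n (loc_scale n sc X S) (loc_add n sc X S) (loc_zero n sc X S)
       (loc_X n sc X S) (loc_D n sc X D S) (loc_hom n sc X S Hom)"

end

theory Submission
  imports Defs
begin

(*
  The Euler operator E of S^-1 M acts on fractions by E(m/s) = (E m - |s| m)/s: by the quotient
  rule X_i d_i (m/s) = (s X_i d_i m - X_i (d_i s) m)/s^2, and Euler's identity
  sum_i X_i d_i s = |s| s for homogeneous s turns the sum over i into s (E m - |s| m)/s^2.
  Hence (E - |m/s|)^a (m/s) = ((E - |m|)^a m)/s with |m| = |m/s| + |s|, which vanishes for
  some a >= 1 because M is generalized Eulerian.

  The operations of S^-1 M are well defined on classes because each is given on representatives
  by a formula that, up to cancelling a common factor, is unchanged when m/s is replaced by
  (a m)/(a s); and any two equivalent fractions have a common expansion of this kind.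
*)

section \<open>Products of commuting powers\<close>

definition powers_fold :: "(nat \<Rightarrow> 'm \<Rightarrow> 'm) \<Rightarrow> nat list \<Rightarrow> (nat \<Rightarrow> nat) \<Rightarrow> 'm \<Rightarrow> 'm"
  where
  "powers_fold X L a = fold (\<lambda>i g. (X i ^^ a i) \<circ> g) L id"

lemma fold_comp_eq_comp_fold:
  fixes P :: "'i \<Rightarrow> 'a \<Rightarrow> 'a" and g :: "'a \<Rightarrow> 'a"
  shows "fold (\<lambda>i g. P i \<circ> g) L g = fold (\<lambda>i g. P i \<circ> g) L id \<circ> g"
proof (induction L arbitrary: g)
  case (Cons i L)
  show ?case
    using Cons.IH[of "P i \<circ> g"] Cons.IH[of "P i"] by (simp add: comp_assoc)
qed simp

lemma powers_fold_Nil [simp]: "powers_fold X [] a = id"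
  by (simp add: powers_fold_def)

lemma powers_fold_Cons: "powers_fold X (i # L) a = powers_fold X L a \<circ> (X i ^^ a i)"
  using fold_comp_eq_comp_fold[of "\<lambda>i. X i ^^ a i" L "X i ^^ a i"] by (simp add: powers_fold_def)

lemma mon_act_eq_powers_fold: "mon_act n X \<alpha> = powers_fold X [0..<n] (Poly_Mapping.lookup \<alpha>)"
  by (simp add: mon_act_def powers_fold_def)

lemma funpow_commute: "(\<And>x. h (f x) = f (h x)) \<Longrightarrow> h ((f ^^ k) x) = (f ^^ k) (h x)"
  by (induction k) simp_all

lemma powers_fold_commute:
  "(\<And>j x. j \<in> set L \<Longrightarrow> h ((X j ^^ a j) x) = (X j ^^ a j) (h x)) \<Longrightarrow>
     h (powers_fold X L a x) = powers_fold X L a (h x)"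
  by (induction L arbitrary: x) (simp_all add: powers_fold_Cons)

lemma powers_fold_eq_id: "(\<And>j. j \<in> set L \<Longrightarrow> a j = 0) \<Longrightarrow> powers_fold X L a = id"
  by (induction L) (auto simp: powers_fold_Cons)

lemma powers_fold_single:
  assumes "distinct L" "i \<in> set L" "\<And>j. j \<in> set L \<Longrightarrow> j \<noteq> i \<Longrightarrow> a j = 0"
  shows "powers_fold X L a = X i ^^ a i"
  using assms
proof (induction L)
  case (Cons j L)
  then show ?case
  proof (cases "j = i")
    case True
    with Cons.prems have "powers_fold X L a = id"
      by (intro powers_fold_eq_id) auto
    with True show ?thesis by (simp add: powers_fold_Cons)
  next
    case False
    with Cons have "a j = 0" "powers_fold X L a = X i ^^ a i" by auto
    then show ?thesis by (simp add: powers_fold_Cons)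
  qed
qed simp

lemma powers_fold_add:
  assumes "\<And>i j x. i \<in> set L \<Longrightarrow> j \<in> set L \<Longrightarrow> X i (X j x) = X j (X i x)"
  shows "powers_fold X L (\<lambda>i. a i + b i) = powers_fold X L a \<circ> powers_fold X L b"
  using assms
proof (induction L)
  case (Cons i L)
  have comm: "(X i ^^ a i) (powers_fold X L b x) = powers_fold X L b ((X i ^^ a i) x)" for x
    by (intro powers_fold_commute funpow_commute[symmetric] funpow_commute) (use Cons.prems in auto)
  have IH: "powers_fold X L (\<lambda>i. a i + b i) = powers_fold X L a \<circ> powers_fold X L b"
    by (rule Cons.IH) (use Cons.prems in auto)
  show ?case
    unfolding powers_fold_Cons IH funpow_add by (simp add: fun_eq_iff comm)
qed simp

section \<open>Monomials and homogeneous polynomials\<close>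

lemma poly_mapping_sum_single_lookup:
  "f = (\<Sum>\<alpha>\<in>Poly_Mapping.keys f. Poly_Mapping.single \<alpha> (Poly_Mapping.lookup f \<alpha>))"
proof (rule poly_mapping_eqI)
  fix k
  show "Poly_Mapping.lookup f k = Poly_Mapping.lookup
      (\<Sum>\<alpha>\<in>Poly_Mapping.keys f. Poly_Mapping.single \<alpha> (Poly_Mapping.lookup f \<alpha>)) k"
    by (cases "k \<in> Poly_Mapping.keys f")
      (simp_all add: lookup_sum lookup_single when_def in_keys_iff)
qed

lemma mdeg_eq_sum_superset:
  "finite A \<Longrightarrow> Poly_Mapping.keys \<alpha> \<subseteq> A \<Longrightarrow>
     mdeg \<alpha> = (\<Sum>i\<in>A. Poly_Mapping.lookup \<alpha> i)"
  unfolding mdeg_def by (rule sum.mono_neutral_left) (auto simp: in_keys_iff)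

lemma pdeg_eq_mdeg:
  "homog_poly s \<Longrightarrow> \<alpha> \<in> Poly_Mapping.keys s \<Longrightarrow> pdeg s = mdeg \<alpha>"
  unfolding homog_poly_def pdeg_def by (metis someI)

lemma mdeg_add: "mdeg (\<alpha> + \<beta>) = mdeg \<alpha> + mdeg \<beta>"
proof -
  let ?A = "Poly_Mapping.keys \<alpha> \<union> Poly_Mapping.keys \<beta>"
  have "mdeg (\<alpha> + \<beta>) = (\<Sum>i\<in>?A. Poly_Mapping.lookup (\<alpha> + \<beta>) i)"
    by (rule mdeg_eq_sum_superset) (use keys_add[of \<alpha> \<beta>] in auto)
  then show ?thesis
    by (simp add: lookup_add sum.distrib mdeg_eq_sum_superset[of ?A])
qed

lemma homog_poly_mult: "homog_poly f \<Longrightarrow> homog_poly g \<Longrightarrow> homog_poly (f * g)"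
  unfolding homog_poly_def using keys_mult[of f g] by (fastforce simp: mdeg_add)

lemma homog_poly_power: "homog_poly f \<Longrightarrow> homog_poly (f ^ k)"
  by (induction k) (simp_all add: homog_poly_mult, simp add: homog_poly_def)

lemma in_R_mult:
  assumes "in_R n f" "in_R n g"
  shows "in_R n (f * g)"
  unfolding in_R_def
proof
  fix \<gamma> assume "\<gamma> \<in> Poly_Mapping.keys (f * g)"
  then obtain \<alpha> \<beta> where \<gamma>: "\<gamma> = \<alpha> + \<beta>"
    and "\<alpha> \<in> Poly_Mapping.keys f" "\<beta> \<in> Poly_Mapping.keys g"
    using keys_mult[of f g] by blast
  with assms have "Poly_Mapping.keys \<alpha> \<subseteq> {..<n}" "Poly_Mapping.keys \<beta> \<subseteq> {..<n}"
    by (auto simp: in_R_def)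
  with \<gamma> show "Poly_Mapping.keys \<gamma> \<subseteq> {..<n}"
    using keys_add[of \<alpha> \<beta>] by blast
qed

lemma in_R_power: "in_R n f \<Longrightarrow> in_R n (f ^ k)"
  by (induction k) (simp_all add: in_R_mult, simp add: in_R_def)

lemma mult_closed_powers: "mult_closed {f ^ k | k. True}"
  unfolding mult_closed_def by (auto, metis power_0, metis power_add)

section \<open>Weyl modules and the action of polynomials\<close>

lemma euler_eq_sum: "euler n (+) 0 X D z = (\<Sum>i<n. X i (D i z))"
proof -
  have "foldr (\<lambda>i acc. g i + acc) L 0 = (\<Sum>i\<leftarrow>L. g i)" for g :: "nat \<Rightarrow> 'a" and L
    by (induction L) simp_all
  then show ?thesis
    by (simp add: euler_def sum_list_distinct_conv_sum_set atLeast0LessThan)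
qed

locale weyl_module = vector_space sc
  for sc :: "'k::field \<Rightarrow> 'm::ab_group_add \<Rightarrow> 'm" +
  fixes n :: nat and X D :: "nat \<Rightarrow> 'm \<Rightarrow> 'm"
  assumes X_hom: "i < n \<Longrightarrow> module_hom sc sc (X i)"
    and D_hom: "i < n \<Longrightarrow> module_hom sc sc (D i)"
    and X_commute: "i < n \<Longrightarrow> j < n \<Longrightarrow> X i (X j m) = X j (X i m)"
    and D_X_commutator:
      "i < n \<Longrightarrow> j < n \<Longrightarrow> D i (X j m) - X j (D i m) = (if i = j then m else 0)"
begin

lemmas X_add = module_hom.add[OF X_hom] and X_scale = module_hom.scale[OF X_hom]
  and X_zero = module_hom.zero[OF X_hom] and X_diff = module_hom.diff[OF X_hom]
  and X_sum = module_hom.sum[OF X_hom]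
lemmas D_scale = module_hom.scale[OF D_hom] and D_sum = module_hom.sum[OF D_hom]

lemma D_X_commute:
  "i < n \<Longrightarrow> j < n \<Longrightarrow> i \<noteq> j \<Longrightarrow> D i (X j m) = X j (D i m)"
  using D_X_commutator[of i j m] by simp

lemma D_X_same: "i < n \<Longrightarrow> D i (X i m) = X i (D i m) + m"
  using D_X_commutator[of i i m] by (simp add: algebra_simps)

lemma funpow_hom: "module_hom sc sc f \<Longrightarrow> module_hom sc sc (f ^^ k)"
  by (induction k) (simp_all add: module_hom_linearI[OF linear_id] module_hom_compose)

lemma powers_fold_hom: "set L \<subseteq> {..<n} \<Longrightarrow> module_hom sc sc (powers_fold X L a)"
  by (induction L)
    (auto simp: powers_fold_Cons module_hom_linearI[OF linear_id]
      intro!: module_hom_compose funpow_hom X_hom)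

abbreviation mon :: "(nat \<Rightarrow>\<^sub>0 nat) \<Rightarrow> 'm \<Rightarrow> 'm" where
  "mon \<alpha> \<equiv> mon_act n X \<alpha>"

lemma mon_hom: "module_hom sc sc (mon \<alpha>)"
  unfolding mon_act_eq_powers_fold by (rule powers_fold_hom) auto

lemmas mon_sum = module_hom.sum[OF mon_hom]

lemma mon_add: "mon (\<alpha> + \<beta>) = mon \<alpha> \<circ> mon \<beta>"
  unfolding mon_act_eq_powers_fold lookup_add by (rule powers_fold_add) (auto simp: X_commute)

lemma mon_single: "i < n \<Longrightarrow> mon (Poly_Mapping.single i 1) = X i"
  unfolding mon_act_eq_powers_fold by (subst powers_fold_single[of _ i]) (auto simp: lookup_single)

lemma X_mon:
  assumes "j < n" shows "X j (mon \<alpha> m) = mon \<alpha> (X j m)"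
  unfolding mon_act_eq_powers_fold
  by (intro powers_fold_commute funpow_commute) (use assms in \<open>auto simp: X_commute\<close>)

lemma mon_split:
  assumes "i < n"
  shows "mon \<alpha> = powers_fold X [0..<n] ((Poly_Mapping.lookup \<alpha>)(i := 0))
    \<circ> (X i ^^ Poly_Mapping.lookup \<alpha> i)"
proof -
  define a where "a = (Poly_Mapping.lookup \<alpha>)(i := 0)"
  define b where "b = (\<lambda>j. if j = i then Poly_Mapping.lookup \<alpha> i else 0)"
  have "Poly_Mapping.lookup \<alpha> = (\<lambda>j. a j + b j)"
    by (auto simp: a_def b_def)
  then have "mon \<alpha> = powers_fold X [0..<n] (\<lambda>j. a j + b j)"
    by (simp only: mon_act_eq_powers_fold)
  also have "\<dots> = powers_fold X [0..<n] a \<circ> powers_fold X [0..<n] b"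
    by (rule powers_fold_add) (auto simp: X_commute)
  also have "powers_fold X [0..<n] b = X i ^^ Poly_Mapping.lookup \<alpha> i"
    using assms by (subst powers_fold_single[of _ i]) (auto simp: b_def)
  finally show ?thesis
    by (simp only: a_def)
qed

lemma D_X_pow:
  "i < n \<Longrightarrow> D i ((X i ^^ k) m) = (X i ^^ k) (D i m) + sc (of_nat k) ((X i ^^ (k - 1)) m)"
proof (induction k)
  case (Suc k)
  have "X i (sc (of_nat k) ((X i ^^ (k - 1)) m)) = sc (of_nat k) ((X i ^^ k) m)"
    using Suc.prems by (cases k) (simp_all add: X_scale X_zero)
  with Suc show ?case
    by (simp add: D_X_same X_add scale_left_distrib add.assoc)
qed simp

lemma D_mon:
  assumes i: "i < n"
  shows "D i (mon \<alpha> m) = mon \<alpha> (D i m)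
    + sc (of_nat (Poly_Mapping.lookup \<alpha> i)) (mon (\<alpha> - Poly_Mapping.single i 1) m)"
proof -
  let ?G = "powers_fold X [0..<n] ((Poly_Mapping.lookup \<alpha>)(i := 0))"
  have "(Poly_Mapping.lookup (\<alpha> - Poly_Mapping.single i 1))(i := 0)
      = (Poly_Mapping.lookup \<alpha>)(i := 0)"
    by (auto simp: fun_eq_iff lookup_minus lookup_single)
  then have mon_pred:
      "mon (\<alpha> - Poly_Mapping.single i 1) = ?G \<circ> (X i ^^ (Poly_Mapping.lookup \<alpha> i - 1))"
    using mon_split[OF i, of "\<alpha> - Poly_Mapping.single i 1"] by (simp add: lookup_minus)
  have G_hom: "module_hom sc sc ?G"
    by (rule powers_fold_hom) auto
  have G_D: "D i (?G x) = ?G (D i x)" for x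
    by (rule powers_fold_commute) (use i in \<open>auto intro: funpow_commute D_X_commute\<close>)
  have "D i (mon \<alpha> m) = ?G (D i ((X i ^^ Poly_Mapping.lookup \<alpha> i) m))"
    by (simp add: mon_split[OF i] G_D)
  also have "\<dots> = mon \<alpha> (D i m)
      + sc (of_nat (Poly_Mapping.lookup \<alpha> i)) (mon (\<alpha> - Poly_Mapping.single i 1) m)"
    unfolding D_X_pow[OF i] mon_pred mon_split[OF i, of \<alpha>]
    by (simp add: module_hom.add[OF G_hom] module_hom.scale[OF G_hom])
  finally show ?thesis .
qed

abbreviation act :: "'k mpoly \<Rightarrow> 'm \<Rightarrow> 'm" where
  "act f \<equiv> poly_act n sc X f"

lemma act_eq_sum_superset:
  assumes "finite A" "Poly_Mapping.keys f \<subseteq> A"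
  shows "act f m = (\<Sum>\<alpha>\<in>A. sc (Poly_Mapping.lookup f \<alpha>) (mon \<alpha> m))"
  unfolding poly_act_def by (rule sum.mono_neutral_left) (use assms in \<open>auto simp: in_keys_iff\<close>)

lemma act_add_poly: "act (f + g) m = act f m + act g m"
proof -
  let ?A = "Poly_Mapping.keys f \<union> Poly_Mapping.keys g"
  have "act (f + g) m = (\<Sum>\<alpha>\<in>?A. sc (Poly_Mapping.lookup (f + g) \<alpha>) (mon \<alpha> m))"
    by (rule act_eq_sum_superset) (use keys_add[of f g] in auto)
  also have "\<dots> = act f m + act g m"
    by (simp add: act_eq_sum_superset[of ?A] lookup_add scale_left_distrib sum.distrib)
  finally show ?thesis .
qed

lemma act_sum_poly: "act (sum g A) m = (\<Sum>a\<in>A. act (g a) m)"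
proof -
  interpret additive "\<lambda>f. act f m"
    by standard (rule act_add_poly)
  show ?thesis by (rule sum)
qed

lemma act_single: "act (Poly_Mapping.single \<alpha> c) m = sc c (mon \<alpha> m)"
  by (simp add: poly_act_def)

lemma act_hom: "module_hom sc sc (act f)"
proof -
  have "act f (sc c x) = sc c (act f x)" for c x
    by (simp add: poly_act_def module_hom.scale[OF mon_hom] scale_sum_right mult.commute)
  then show ?thesis
    by (simp add: module_hom_iff module_axioms poly_act_def module_hom.add[OF mon_hom]
        scale_right_distrib sum.distrib)
qed

lemmas act_add = module_hom.add[OF act_hom] and act_scale = module_hom.scale[OF act_hom]
  and act_zero = module_hom.zero[OF act_hom] and act_diff = module_hom.diff[OF act_hom]
  and act_sum = module_hom.sum[OF act_hom]

lemma act_mult: "act (f * g) m = act f (act g m)"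
proof -
  let ?f = "Poly_Mapping.lookup f" and ?g = "Poly_Mapping.lookup g"
  have "f * g = (\<Sum>\<alpha>\<in>Poly_Mapping.keys f. \<Sum>\<beta>\<in>Poly_Mapping.keys g.
      Poly_Mapping.single (\<alpha> + \<beta>) (?f \<alpha> * ?g \<beta>))"
    by (subst (1 2) poly_mapping_sum_single_lookup) (simp add: sum_product mult_single)
  then have "act (f * g) m = (\<Sum>\<alpha>\<in>Poly_Mapping.keys f. \<Sum>\<beta>\<in>Poly_Mapping.keys g.
      sc (?f \<alpha> * ?g \<beta>) (mon (\<alpha> + \<beta>) m))"
    by (simp add: act_sum_poly act_single)
  also have "\<dots> = act f (act g m)"
    by (simp add: poly_act_def mon_add mon_sum module_hom.scale[OF mon_hom] scale_sum_right)
  finally show ?thesis .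
qed

lemma act_commute: "act f (act g m) = act g (act f m)"
  by (metis act_mult mult.commute)

lemma X_act: "i < n \<Longrightarrow> X i (act f m) = act f (X i m)"
  by (simp add: poly_act_def X_sum X_scale X_mon)

lemma act_pderiv: "act (pderiv_mp i f) m = (\<Sum>\<alpha>\<in>Poly_Mapping.keys f.
    sc (of_nat (Poly_Mapping.lookup \<alpha> i) * Poly_Mapping.lookup f \<alpha>)
      (mon (\<alpha> - Poly_Mapping.single i 1) m))"
  by (simp add: pderiv_mp_def act_sum_poly act_single)

lemma D_act: "i < n \<Longrightarrow> D i (act f m) = act f (D i m) + act (pderiv_mp i f) m"
  unfolding act_pderiv
  by (simp add: poly_act_def D_sum D_scale D_mon scale_right_distrib sum.distrib mult.commute)

lemma act_pderiv_mult:
  assumes "i < n"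
  shows "act (pderiv_mp i (f * g)) m
    = act f (act (pderiv_mp i g) m) + act (pderiv_mp i f) (act g m)"
proof -
  have "act (f * g) (D i m) + act (pderiv_mp i (f * g)) m = D i (act (f * g) m)"
    using assms by (simp only: D_act)
  also have "act (f * g) m = act f (act g m)"
    by (rule act_mult)
  also have "D i (act f (act g m))
      = act (f * g) (D i m) + (act f (act (pderiv_mp i g) m) + act (pderiv_mp i f) (act g m))"
    using assms by (simp add: D_act act_add act_mult add.assoc)
  finally show ?thesis
    by simp
qed

lemma X_mon_minus_single:
  assumes "i < n" "Poly_Mapping.lookup \<alpha> i \<noteq> 0"
  shows "X i (mon (\<alpha> - Poly_Mapping.single i 1) m) = mon \<alpha> m"
proof -
  have "\<alpha> = (\<alpha> - Poly_Mapping.single i 1) + Poly_Mapping.single i 1"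
    using assms(2)
    by (intro poly_mapping_eqI) (auto simp: lookup_add lookup_minus lookup_single when_def)
  then have "mon \<alpha> = mon (\<alpha> - Poly_Mapping.single i 1) \<circ> X i"
    by (metis mon_add mon_single[OF assms(1)])
  then show ?thesis
    by (simp add: X_mon[OF assms(1)])
qed

abbreviation euler_shift :: "int \<Rightarrow> 'm \<Rightarrow> 'm" where
  "euler_shift e w \<equiv> euler n (+) 0 X D w + sc (- of_int e) w"

lemma euler_identity:
  assumes R: "in_R n s" and H: "homog_poly s"
  shows "(\<Sum>i<n. X i (act (pderiv_mp i s) m)) = sc (of_nat (pdeg s)) (act s m)"
proof -
  let ?K = "Poly_Mapping.keys s" and ?s = "Poly_Mapping.lookup s"
  let ?c = "\<lambda>i \<alpha>. of_nat (Poly_Mapping.lookup \<alpha> i) * ?s \<alpha>"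
  have "(\<Sum>i<n. X i (act (pderiv_mp i s) m))
      = (\<Sum>i<n. \<Sum>\<alpha>\<in>?K. sc (?c i \<alpha>) (X i (mon (\<alpha> - Poly_Mapping.single i 1) m)))"
    by (simp add: act_pderiv X_sum X_scale)
  also have "\<dots> = (\<Sum>i<n. \<Sum>\<alpha>\<in>?K. sc (?c i \<alpha>) (mon \<alpha> m))"
    by (intro sum.cong refl)
      (metis X_mon_minus_single lessThan_iff mult_eq_0_iff of_nat_0 scale_zero_left)
  also have "\<dots> = (\<Sum>\<alpha>\<in>?K. sc (of_nat (mdeg \<alpha>) * ?s \<alpha>) (mon \<alpha> m))"
  proof (subst sum.swap, intro sum.cong refl)
    fix \<alpha> assume "\<alpha> \<in> ?K"
    with R have "mdeg \<alpha> = (\<Sum>i<n. Poly_Mapping.lookup \<alpha> i)"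
      by (intro mdeg_eq_sum_superset) (auto simp: in_R_def)
    then show "(\<Sum>i<n. sc (?c i \<alpha>) (mon \<alpha> m))
        = sc (of_nat (mdeg \<alpha>) * ?s \<alpha>) (mon \<alpha> m)"
      by (simp add: scale_sum_left[symmetric] sum_distrib_right)
  qed
  also have "\<dots> = sc (of_nat (pdeg s)) (act s m)"
    by (simp add: poly_act_def scale_sum_right pdeg_eq_mdeg[OF H])
  finally show ?thesis .
qed

end

section \<open>Localization\<close>

locale weyl_localization = weyl_module sc n X D
  for sc :: "'k::field \<Rightarrow> 'm::ab_group_add \<Rightarrow> 'm" and n X D +
  fixes S :: "'k mpoly set"
  assumes mult_closed_S: "mult_closed S"
begin

lemma one_in_S: "1 \<in> S"
  and mult_in_S: "s \<in> S \<Longrightarrow> t \<in> S \<Longrightarrow> s * t \<in> S"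
  using mult_closed_S by (auto simp: mult_closed_def)

abbreviation rel :: "'m \<times> 'k mpoly \<Rightarrow> 'm \<times> 'k mpoly \<Rightarrow> bool" where
  "rel \<equiv> loc_rel n sc X S"

abbreviation frac :: "'m \<Rightarrow> 'k mpoly \<Rightarrow> ('m \<times> 'k mpoly) set" where
  "frac m s \<equiv> loc_class n sc X S (m, s)"

lemma rel_iff:
  "rel (m, s) (m', s') \<longleftrightarrow>
     s \<in> S \<and> s' \<in> S \<and> (\<exists>t\<in>S. act (t * s') m = act (t * s) m')"
  unfolding loc_rel_def by (simp add: act_diff act_mult)

lemma rel_refl: "s \<in> S \<Longrightarrow> rel (m, s) (m, s)"
  using one_in_S by (auto simp: rel_iff)

lemma rel_sym: "rel p q \<Longrightarrow> rel q p"
  by (cases p, cases q) (auto simp: rel_iff intro: sym)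

lemma rel_trans:
  assumes "rel p q" "rel q r"
  shows "rel p r"
proof -
  obtain m1 s1 m2 s2 m3 s3 where p: "p = (m1, s1)" and q: "q = (m2, s2)" and r: "r = (m3, s3)"
    by (cases p, cases q, cases r) blast
  from assms obtain t u where S: "s1 \<in> S" "s2 \<in> S" "s3 \<in> S" "t \<in> S" "u \<in> S"
    and h1: "act (t * s2) m1 = act (t * s1) m2" and h2: "act (u * s3) m2 = act (u * s2) m3"
    unfolding p q r rel_iff by blast
  have "act (t * u * s2 * s3) m1 = act (u * s3) (act (t * s2) m1)"
    by (simp add: act_mult[symmetric] ac_simps)
  also have "\<dots> = act (t * s1) (act (u * s2) m3)"
    by (simp add: h1 act_commute h2)
  also have "\<dots> = act (t * u * s2 * s1) m3"
    by (simp add: act_mult[symmetric] ac_simps)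
  finally show ?thesis
    using S unfolding p r
    by (auto simp: rel_iff mult_in_S mult.assoc intro!: bexI[of _ "t * u * s2"])
qed

lemma frac_eqI: "rel p q \<Longrightarrow> loc_class n sc X S p = loc_class n sc X S q"
  unfolding loc_class_def by (blast intro: rel_sym rel_trans)

lemma frac_cancel: "u \<in> S \<Longrightarrow> s \<in> S \<Longrightarrow> frac (act u m) (u * s) = frac m s"
  by (rule frac_eqI) (auto simp: rel_iff mult_in_S act_mult act_commute intro!: bexI[OF _ one_in_S])

lemma rel_common_expansion:
  assumes "rel (m, s) (m', s')"
  obtains a a' where "a \<in> S" "a' \<in> S" "act a m = act a' m'" "a * s = a' * s'"
proof -
  from assms obtain t where "s \<in> S" "s' \<in> S" "t \<in> S" "act (t * s') m = act (t * s) m'"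
    unfolding rel_iff by blast
  then show ?thesis
    by (intro that[of "t * s'" "t * s"]) (simp_all add: mult_in_S ac_simps)
qed

lemma frac_map_respects_rel:
  assumes expand: "\<And>a m s. a \<in> S \<Longrightarrow> s \<in> S \<Longrightarrow>
      loc_class n sc X S (F (act a m) (a * s)) = loc_class n sc X S (F m s)"
    and "rel (m, s) (m', s')"
  shows "loc_class n sc X S (F m s) = loc_class n sc X S (F m' s')"
proof -
  from assms(2) have "s \<in> S" "s' \<in> S" by (simp_all add: rel_iff)
  obtain a a' where "a \<in> S" "a' \<in> S" "act a m = act a' m'" "a * s = a' * s'"
    using rel_common_expansion[OF assms(2)] .
  with \<open>s \<in> S\<close> \<open>s' \<in> S\<close> show ?thesis
    by (metis expand)
qed

lemma loc_rep_frac: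
  assumes "s \<in> S"
  obtains m' s' where "loc_rep (frac m s) = (m', s')" "rel (m, s) (m', s')"
proof -
  have "(m, s) \<in> frac m s"
    using assms by (simp add: loc_class_def rel_refl)
  then have "loc_rep (frac m s) \<in> frac m s"
    unfolding loc_rep_def by (rule someI)
  then show ?thesis
    using that by (cases "loc_rep (frac m s)") (simp add: loc_class_def)
qed

lemma case_loc_rep_frac:
  assumes "s \<in> S"
    and expand: "\<And>a m s. a \<in> S \<Longrightarrow> s \<in> S \<Longrightarrow>
      loc_class n sc X S (F (act a m) (a * s)) = loc_class n sc X S (F m s)"
  shows "(case loc_rep (frac m s) of (m', s') \<Rightarrow> loc_class n sc X S (F m' s'))
    = loc_class n sc X S (F m s)"
proof -
  obtain m' s' where "loc_rep (frac m s) = (m', s')" "rel (m, s) (m', s')"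
    using loc_rep_frac[OF assms(1)] .
  then show ?thesis
    using frac_map_respects_rel[OF expand] by simp
qed

lemma loc_scale_frac: "s \<in> S \<Longrightarrow> loc_scale n sc X S c (frac m s) = frac (sc c m) s"
  unfolding loc_scale_def
  by (rule case_loc_rep_frac) (simp_all add: act_scale[symmetric] frac_cancel)

lemma loc_X_frac:
  "s \<in> S \<Longrightarrow> i < n \<Longrightarrow> loc_X n sc X S i (frac m s) = frac (X i m) s"
  unfolding loc_X_def by (rule case_loc_rep_frac) (simp_all add: X_act frac_cancel)

lemma loc_add_frac:
  assumes "s1 \<in> S" "s2 \<in> S"
  shows "loc_add n sc X S (frac m1 s1) (frac m2 s2) = frac (act s2 m1 + act s1 m2) (s1 * s2)"
proof -
  have expand1:
    "frac (act t (act a m) + act (a * s) u) (a * s * t) = frac (act t m + act s u) (s * t)"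
    if "a \<in> S" "s \<in> S" "t \<in> S" for a m s t u
    using that by (simp add: act_add act_mult[symmetric] ac_simps frac_cancel[symmetric] mult_in_S)
  have expand2:
    "frac (act (a * s) u + act t (act a m)) (t * (a * s)) = frac (act s u + act t m) (t * s)"
    if "a \<in> S" "s \<in> S" "t \<in> S" for a m s t u
    using that by (simp add: act_add act_mult[symmetric] ac_simps frac_cancel[symmetric] mult_in_S)
  obtain m1' s1' where r1: "loc_rep (frac m1 s1) = (m1', s1')" "rel (m1, s1) (m1', s1')"
    using loc_rep_frac[OF assms(1)] .
  obtain m2' s2' where r2: "loc_rep (frac m2 s2) = (m2', s2')" "rel (m2, s2) (m2', s2')"
    using loc_rep_frac[OF assms(2)] .
  have "frac (act s2 m1 + act s1 m2) (s1 * s2) = frac (act s2' m1 + act s1 m2') (s1 * s2')"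
    by (rule frac_map_respects_rel[where F = "\<lambda>m s. (act s m1 + act s1 m, s1 * s)", OF _ r2(2)])
      (simp add: expand2 assms)
  also have "\<dots> = frac (act s2' m1' + act s1' m2') (s1' * s2')"
    using r2(2) unfolding rel_iff
    by (intro frac_map_respects_rel[where F = "\<lambda>m s. (act s2' m + act s m2', s * s2')", OF _ r1(2)])
      (simp add: expand1)
  finally show ?thesis
    by (simp add: loc_add_def r1(1) r2(1))
qed

lemma quotient_numerator_expand:
  assumes "i < n"
  shows "act (a * s) (D i (act a m)) - act (pderiv_mp i (a * s)) (act a m)
    = act (a * a) (act s (D i m) - act (pderiv_mp i s) m)"
  unfolding act_pderiv_mult[OF assms] D_act[OF assms]
  by (simp add: act_add act_diff act_mult[symmetric] ac_simps)

lemma loc_D_frac: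
  assumes "s \<in> S" "i < n"
  shows "loc_D n sc X D S i (frac m s) = frac (act s (D i m) - act (pderiv_mp i s) m) (s * s)"
  unfolding loc_D_def
proof (rule case_loc_rep_frac[OF assms(1)])
  fix a m s assume "a \<in> S" "s \<in> S"
  then show "frac (act (a * s) (D i (act a m)) - act (pderiv_mp i (a * s)) (act a m))
      (a * s * (a * s)) = frac (act s (D i m) - act (pderiv_mp i s) m) (s * s)"
    using frac_cancel[of "a * a" "s * s"]
    by (simp add: quotient_numerator_expand assms(2) mult_in_S ac_simps)
qed

lemma loc_zero_frac: "s \<in> S \<Longrightarrow> loc_zero n sc X S = frac 0 s"
  unfolding loc_zero_def using frac_cancel[OF _ one_in_S, of s 0] by (simp add: act_zero)

lemma loc_add_same_denom:
  "s \<in> S \<Longrightarrow> loc_add n sc X S (frac a s) (frac b s) = frac (a + b) s"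
  by (simp add: loc_add_frac act_add[symmetric] frac_cancel)

abbreviation loc_euler :: "('m \<times> 'k mpoly) set \<Rightarrow> ('m \<times> 'k mpoly) set" where
  "loc_euler \<equiv>
     euler n (loc_add n sc X S) (loc_zero n sc X S) (loc_X n sc X S) (loc_D n sc X D S)"

abbreviation loc_euler_shift :: "int \<Rightarrow> ('m \<times> 'k mpoly) set \<Rightarrow> ('m \<times> 'k mpoly) set" where
  "loc_euler_shift e w \<equiv> loc_add n sc X S (loc_euler w) (loc_scale n sc X S (- of_int e) w)"

lemma loc_euler_frac:
  assumes "s \<in> S" "in_R n s" "homog_poly s"
  shows "loc_euler (frac m s) = frac (euler n (+) 0 X D m - sc (of_nat (pdeg s)) m) s"
proof -
  let ?N = "\<lambda>i. act s (D i m) - act (pderiv_mp i s) m"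
  have "foldr (\<lambda>i. loc_add n sc X S (loc_X n sc X S i (loc_D n sc X D S i (frac m s))))
      L (loc_zero n sc X S) = frac (\<Sum>i\<leftarrow>L. X i (?N i)) (s * s)"
    if "set L \<subseteq> {..<n}" for L
    using that by (induction L)
      (simp_all add: assms(1) mult_in_S loc_zero_frac loc_D_frac loc_X_frac loc_add_same_denom)
  then have "loc_euler (frac m s) = frac (\<Sum>i<n. X i (?N i)) (s * s)"
    by (simp add: euler_def sum_list_distinct_conv_sum_set atLeast0LessThan)
  also have "(\<Sum>i<n. X i (?N i)) = act s (euler n (+) 0 X D m - sc (of_nat (pdeg s)) m)"
    by (simp add: X_diff sum_subtractf euler_identity[OF assms(2,3)] euler_eq_sum
        X_act[symmetric] act_sum act_diff act_scale)
  finally show ?thesis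
    by (simp add: frac_cancel assms(1))
qed

lemma loc_euler_shift_frac:
  assumes "s \<in> S" "in_R n s" "homog_poly s"
  shows "loc_euler_shift d (frac m s) = frac (euler_shift (d + int (pdeg s)) m) s"
  using assms
  by (simp add: loc_euler_frac loc_scale_frac loc_add_same_denom scale_left_diff_distrib[symmetric]
      algebra_simps)

lemma loc_euler_shift_funpow_frac:
  assumes "s \<in> S" "in_R n s" "homog_poly s"
  shows "(loc_euler_shift d ^^ k) (frac m s) = frac ((euler_shift (d + int (pdeg s)) ^^ k) m) s"
  by (induction k arbitrary: m)
    (simp_all only: funpow_Suc_right comp_apply loc_euler_shift_frac[OF assms] funpow_0)

lemma gen_eulerian_localization:
  assumes "gen_eulerian n sc (+) 0 X D Hom" and "\<forall>s\<in>S. in_R n s \<and> homog_poly s"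
  shows "gen_eulerian n (loc_scale n sc X S) (loc_add n sc X S) (loc_zero n sc X S)
    (loc_X n sc X S) (loc_D n sc X D S) (loc_hom n sc X S Hom)"
  unfolding gen_eulerian_def
proof (intro allI ballI)
  fix d z assume "z \<in> loc_hom n sc X S Hom d"
  then obtain m s where z: "z = frac m s" and s: "s \<in> S" and m: "m \<in> Hom (d + int (pdeg s))"
    unfolding loc_hom_def by blast
  from assms(1) m obtain k where "k \<ge> 1"
    and k: "(euler_shift (d + int (pdeg s)) ^^ k) m = 0"
    unfolding gen_eulerian_def by blast
  moreover have "in_R n s" "homog_poly s"
    using s assms(2) by auto
  then have "(loc_euler_shift d ^^ k) z = frac 0 s"
    by (simp only: z loc_euler_shift_funpow_frac[OF s] k)
  moreover note loc_zero_frac[OF s]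
  ultimately show "\<exists>k\<ge>1. (loc_euler_shift d ^^ k) z = loc_zero n sc X S"
    by blast
qed

end

lemma weyl_module_if_graded:
  "graded_weyl_module n sc X D Hom \<Longrightarrow> weyl_module sc n X D"
  unfolding graded_weyl_module_def weyl_module_def weyl_module_axioms_def
  by (simp add: module_hom_iff_linear)

lemma loc_gen_eulerian_if_gen_eulerian:
  assumes "graded_weyl_module n sc X D Hom" "gen_eulerian n sc (+) 0 X D Hom"
    and "\<forall>s\<in>S. in_R n s \<and> homog_poly s" "mult_closed S"
  shows "loc_gen_eulerian n sc X D Hom S"
proof -
  interpret weyl_localization sc n X D S
    using weyl_module_if_graded[OF assms(1)] assms(4)
    by (simp add: weyl_localization_def weyl_localization_axioms_def)
  show ?thesis
    unfolding loc_gen_eulerian_def by (rule gen_eulerian_localization[OF assms(2,3)])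
qed

theorem mainTheorem4:
  fixes n :: nat
    and sc :: "'k::field_char_0 \<Rightarrow> 'm::ab_group_add \<Rightarrow> 'm"
    and X D :: "nat \<Rightarrow> 'm \<Rightarrow> 'm"
    and Hom :: "int \<Rightarrow> 'm set"
    and S :: "'k mpoly set"
  assumes "graded_weyl_module n sc X D Hom"
    and "gen_eulerian n sc (+) 0 X D Hom"
    and "\<forall>s\<in>S. in_R n s \<and> homog_poly s"
    and "mult_closed S"
  shows "loc_gen_eulerian n sc X D Hom S \<and>
         (\<forall>f. in_R n f \<and> homog_poly f \<longrightarrow>
               loc_gen_eulerian n sc X D Hom {f ^ k | k. True})"
proof (intro conjI allI impI)
  show "loc_gen_eulerian n sc X D Hom S"
    by (rule loc_gen_eulerian_if_gen_eulerian[OF assms])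
  fix f :: "'k mpoly"
  assume "in_R n f \<and> homog_poly f"
  then show "loc_gen_eulerian n sc X D Hom {f ^ k | k. True}"
    by (intro loc_gen_eulerian_if_gen_eulerian[OF assms(1,2)] mult_closed_powers)
      (auto simp: in_R_power homog_poly_power)
qed

end
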